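(* Suppose $EX>0$ and $(X,W)$ satisfies Cramér's condition. Then $T$ is arithmetic on $\mathbb{Z}$ and $(\tilde X,\tilde W)$ is strongly nonlattice with $T$.
   Context: Let $(X,W)$ be a random vector with $X\in\mathbb{R}$, $W\in\mathbb{R}^m$, and $\{(X_n,W_n)\}_{n\ge0}$ the random walk with $(X_0,W_0)=(0,0)$ and i.i.d. increments distributed as $(X,W)$. Cramér's condition: $\limsup_{|(\xi_1,\xi_2)|\to\infty}|Ee^{i(\xi_1X+\xi_2\cdot W)}|<1$. Let $T=\inf\{n:X_n>0\}$, $\tilde X=X_T$, $\tilde W=W_T$. $T$ is arithmetic on $\mathbb{Z}$ if $P(T\in\mathbb{Z})=1$ but $P(T\in B)<1$ for every proper subgroup $B$ of $\mathbb{Z}$. $(\tilde X,\tilde W)$ is strongly nonlattice with $T$ if $\liminf_{\xi_1^2+|\xi_2|^2\to\infty}\inf_{-\pi<\xi_3<\pi}|1-Ee^{i\xi_1\tilde X+i\xi_2\cdot\tilde W+i\xi_3T}|>0$. *)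

theory Defs
  imports "HOL-Probability.Probability"
begin

definition walk :: "(nat \<Rightarrow> 'a \<Rightarrow> real \<times> (real ^ 'm)) \<Rightarrow> nat \<Rightarrow> 'a \<Rightarrow> real \<times> (real ^ 'm)" where
  "walk Z n \<omega> = (\<Sum>k<n. Z k \<omega>)"

definition ladder_finite :: "(nat \<Rightarrow> 'a \<Rightarrow> real \<times> (real ^ 'm)) \<Rightarrow> 'a \<Rightarrow> bool" where
  "ladder_finite Z \<omega> \<longleftrightarrow> (\<exists>n. fst (walk Z n \<omega>) > 0)"

text \<open>T = inf{n : X_n > 0} (set to 0 on the event where it is infinite).\<close>
definition ladder_time :: "(nat \<Rightarrow> 'a \<Rightarrow> real \<times> (real ^ 'm)) \<Rightarrow> 'a \<Rightarrow> nat" where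
  "ladder_time Z \<omega> = (if ladder_finite Z \<omega> then (LEAST n. fst (walk Z n \<omega>) > 0) else 0)"

definition ladder_height :: "(nat \<Rightarrow> 'a \<Rightarrow> real \<times> (real ^ 'm)) \<Rightarrow> 'a \<Rightarrow> real \<times> (real ^ 'm)" where
  "ladder_height Z \<omega> = walk Z (ladder_time Z \<omega>) \<omega>"

definition int_subgroup :: "int set \<Rightarrow> bool" where
  "int_subgroup B \<longleftrightarrow> 0 \<in> B \<and> (\<forall>a\<in>B. \<forall>b\<in>B. a + b \<in> B) \<and> (\<forall>a\<in>B. - a \<in> B)"

definition arithmetic_on_Z :: "'a measure \<Rightarrow> ('a \<Rightarrow> bool) \<Rightarrow> ('a \<Rightarrow> nat) \<Rightarrow> bool" where
  "arithmetic_on_Z M fin T \<longleftrightarrow>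
     measure M {\<omega> \<in> space M. fin \<omega>} = 1 \<and>
     (\<forall>B. int_subgroup B \<and> B \<noteq> UNIV \<longrightarrow> measure M {\<omega> \<in> space M. fin \<omega> \<and> int (T \<omega>) \<in> B} < 1)"

definition cramer_condition :: "'a measure \<Rightarrow> ('a \<Rightarrow> real \<times> (real ^ 'm)) \<Rightarrow> bool" where
  "cramer_condition M Z0 \<longleftrightarrow>
     Limsup at_infinity (\<lambda>\<xi> :: real \<times> (real ^ 'm).
        ereal (cmod (LINT \<omega>|M. cis (fst \<xi> * fst (Z0 \<omega>) + snd \<xi> \<bullet> snd (Z0 \<omega>))))) < 1"

definition strongly_nonlattice_with :: "'a measure \<Rightarrow> ('a \<Rightarrow> real \<times> (real ^ 'm)) \<Rightarrow> ('a \<Rightarrow> nat) \<Rightarrow> bool" where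
  "strongly_nonlattice_with M H T \<longleftrightarrow>
     Liminf at_infinity (\<lambda>\<xi> :: real \<times> (real ^ 'm).
        INF t \<in> {-pi<..<pi}. ereal (cmod (1 - (LINT \<omega>|M.
           cis (fst \<xi> * fst (H \<omega>) + snd \<xi> \<bullet> snd (H \<omega>) + t * real (T \<omega>)))))) > 0"

end

theory Submission
  imports Defs
begin

text \<open>
  If X_1 > 0, an event of positive probability because E X > 0, then T = 1; since 1 generates
  the integers, T is arithmetic. T is finite almost surely by a weak law of large numbers:
  truncating X to [-L, K], Hoeffding's inequality controls the bounded part and Markov's
  inequality the lower tail.

  For the nonlattice property, split the walk S_n = (X_n, W_n) at the first time its height X_n
  attains its maximum over {0..n}. Time reversal and independence turn this into the
  Wiener--Hopf factorisation
    (1 - E[s^T e^(i \<xi>\<cdot>S_T)]) (1 - E[s^T' e^(i \<xi>\<cdot>S_T')]) = 1 - s \<phi>(\<xi>)   for |s| < 1,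
  where T' is the first weak descending ladder epoch and \<phi> the characteristic function of
  (X, W). The second factor has modulus at most 2; letting s tend radially to e^(i t) gives
  1 - |\<phi>(\<xi>)| \<le> 2 |1 - E e^(i (\<xi>\<cdot>S_T + t T))|, and Cramer's condition keeps |\<phi>(\<xi>)|
  below some \<kappa> < 1 for large \<xi>.
\<close>

section \<open>Paths, ladder epochs and the first maximum\<close>

lemma sum_lessThan_shift:
  fixes f :: "nat \<Rightarrow> 'v::ab_group_add"
  shows "(\<Sum>k<m. f (j + k)) = (\<Sum>k<j + m. f k) - (\<Sum>k<j. f k)"
  by (induction m) (simp_all add: algebra_simps)

lemma sum_lessThan_reverse:
  fixes f :: "nat \<Rightarrow> 'v::ab_group_add"
  assumes "m \<le> j"
  shows "(\<Sum>k<m. f (j - Suc k)) = (\<Sum>k<j. f k) - (\<Sum>k<j - m. f k)"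
  using assms
proof (induction m)
  case (Suc m)
  then have "j - m = Suc (j - Suc m)" by simp
  with Suc show ?case by simp
qed simp

lemma first_argmax_ex1:
  fixes s :: "nat \<Rightarrow> 'a::linorder"
  shows "\<exists>!j. j \<le> n \<and> (\<forall>i<j. s i < s j) \<and> (\<forall>i\<in>{j<..n}. s i \<le> s j)"
proof -
  define is_max where "is_max j \<longleftrightarrow> j \<le> n \<and> (\<forall>i\<le>n. s i \<le> s j)" for j
  have "\<exists>j. is_max j"
  proof -
    have "Max (s ` {..n}) \<in> s ` {..n}" by (rule Max_in) auto
    then obtain j where "j \<le> n" "Max (s ` {..n}) = s j" by blast
    then show ?thesis unfolding is_max_def by (metis Max_ge atMost_iff finite_atMost finite_imageI imageI)
  qed
  define j0 where "j0 = (LEAST j. is_max j)"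
  have j0: "is_max j0" unfolding j0_def by (rule LeastI_ex) fact
  have j0_first: "s i < s j0" if "i < j0" for i
  proof -
    have "\<not> is_max i" using that not_less_Least unfolding j0_def by blast
    with j0 that obtain k where "k \<le> n" "s i < s k" unfolding is_max_def by (auto simp: not_le)
    with j0 show ?thesis unfolding is_max_def by (meson less_le_trans)
  qed
  have "j = j0" if "j \<le> n" "\<forall>i<j. s i < s j" "\<forall>i\<in>{j<..n}. s i \<le> s j" for j
  proof -
    have "\<not> j < j0"
    proof
      assume "j < j0"
      then have "s j0 \<le> s j" using that(3) j0 unfolding is_max_def by simp
      moreover have "s j < s j0" using \<open>j < j0\<close> by (rule j0_first)
      ultimately show False by simp
    qed
    moreover have "\<not> j0 < j"
    proof
      assume "j0 < j"
      then have "s j0 < s j" using that(2) by simp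
      moreover have "s j \<le> s j0" using that(1) j0 unfolding is_max_def by simp
      ultimately show False by simp
    qed
    ultimately show ?thesis by simp
  qed
  moreover have "j0 \<le> n" "\<forall>i\<in>{j0<..n}. s i \<le> s j0" using j0 unfolding is_max_def by auto
  ultimately show ?thesis using j0_first by blast
qed

definition path_height :: "(nat \<Rightarrow> real \<times> 'u) \<Rightarrow> nat \<Rightarrow> real" where
  "path_height p i = (\<Sum>k<i. fst (p k))"

definition stays_nonpos :: "nat \<Rightarrow> (nat \<Rightarrow> real \<times> 'u) \<Rightarrow> bool" where
  "stays_nonpos n p \<longleftrightarrow> (\<forall>i\<in>{1..n}. path_height p i \<le> 0)"

definition stays_pos :: "nat \<Rightarrow> (nat \<Rightarrow> real \<times> 'u) \<Rightarrow> bool" where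
  "stays_pos n p \<longleftrightarrow> (\<forall>i\<in>{1..n}. 0 < path_height p i)"

definition ascending_ladder_epoch :: "nat \<Rightarrow> (nat \<Rightarrow> real \<times> 'u) \<Rightarrow> bool" where
  "ascending_ladder_epoch n p \<longleftrightarrow> (\<forall>i\<in>{1..<n}. path_height p i \<le> 0) \<and> 0 < path_height p n"

definition weak_descending_ladder_epoch :: "nat \<Rightarrow> (nat \<Rightarrow> real \<times> 'u) \<Rightarrow> bool" where
  "weak_descending_ladder_epoch n p \<longleftrightarrow> 0 < n \<and> (\<forall>i\<in>{1..<n}. 0 < path_height p i) \<and> path_height p n \<le> 0"

lemma path_height_0 [simp]: "path_height p 0 = 0"
  by (simp add: path_height_def)

lemma all_atLeastAtMost_Suc: "(\<forall>i\<in>{1..Suc n}. P i) \<longleftrightarrow> (\<forall>i\<in>{1..<Suc n}. P i) \<and> P (Suc n)"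
  by (auto simp: atLeastLessThanSuc_atLeastAtMost atLeastAtMostSuc_conv)

lemma stays_nonpos_Suc_cases:
  "stays_nonpos n p \<longleftrightarrow> stays_nonpos (Suc n) p \<or> ascending_ladder_epoch (Suc n) p"
  "\<not> (stays_nonpos (Suc n) p \<and> ascending_ladder_epoch (Suc n) p)"
  unfolding stays_nonpos_def ascending_ladder_epoch_def all_atLeastAtMost_Suc
  by (auto simp: atLeastLessThanSuc_atLeastAtMost)

lemma stays_pos_Suc_cases:
  "stays_pos n p \<longleftrightarrow> stays_pos (Suc n) p \<or> weak_descending_ladder_epoch (Suc n) p"
  "\<not> (stays_pos (Suc n) p \<and> weak_descending_ladder_epoch (Suc n) p)"
  unfolding stays_pos_def weak_descending_ladder_epoch_def all_atLeastAtMost_Suc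
  by (auto simp: atLeastLessThanSuc_atLeastAtMost)

lemma ascending_ladder_epoch_unique:
  assumes "ascending_ladder_epoch n p" "ascending_ladder_epoch m p"
  shows "n = m"
proof -
  have "\<not> n < m" if "ascending_ladder_epoch n p" "ascending_ladder_epoch m p" for n m
  proof
    assume "n < m"
    moreover have "n \<noteq> 0" using that(1) by (metis ascending_ladder_epoch_def path_height_0 less_irrefl)
    ultimately have "n \<in> {1..<m}" by simp
    with that(2) have "path_height p n \<le> 0" unfolding ascending_ladder_epoch_def by blast
    with that(1) show False unfolding ascending_ladder_epoch_def by simp
  qed
  with assms show ?thesis by (meson linorder_neqE_nat)
qed

lemma weak_descending_ladder_epoch_unique:
  assumes "weak_descending_ladder_epoch n p" "weak_descending_ladder_epoch m p"
  shows "n = m"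
proof -
  have "\<not> n < m" if "weak_descending_ladder_epoch n p" "weak_descending_ladder_epoch m p" for n m
  proof
    assume "n < m"
    with that(1) have "n \<in> {1..<m}" by (simp add: weak_descending_ladder_epoch_def)
    with that(2) have "0 < path_height p n" unfolding weak_descending_ladder_epoch_def by blast
    with that(1) show False unfolding weak_descending_ladder_epoch_def by simp
  qed
  with assms show ?thesis by (meson linorder_neqE_nat)
qed

lemma path_height_reversed:
  assumes "m \<le> j"
  shows "path_height (\<lambda>k. p (j - Suc k)) m = path_height p j - path_height p (j - m)"
  unfolding path_height_def using sum_lessThan_reverse[OF assms, of "\<lambda>k. fst (p k)"] .

lemma path_height_shifted: "path_height (\<lambda>k. p (j + k)) m = path_height p (j + m) - path_height p j"
  unfolding path_height_def by (rule sum_lessThan_shift)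

lemma stays_pos_reversed_iff:
  "stays_pos j (\<lambda>k. p (j - Suc k)) \<longleftrightarrow> (\<forall>i<j. path_height p i < path_height p j)"
proof -
  have "(\<forall>m\<in>{1..j}. path_height p (j - m) < path_height p j) \<longleftrightarrow> (\<forall>i<j. path_height p i < path_height p j)"
  proof safe
    fix i assume "\<forall>m\<in>{1..j}. path_height p (j - m) < path_height p j" "i < j"
    moreover from \<open>i < j\<close> have "j - i \<in> {1..j}" "j - (j - i) = i" by auto
    ultimately show "path_height p i < path_height p j" by metis
  next
    fix m assume "\<forall>i<j. path_height p i < path_height p j" "m \<in> {1..j}"
    moreover from \<open>m \<in> {1..j}\<close> have "j - m < j" by auto
    ultimately show "path_height p (j - m) < path_height p j" by blast
  qed
  moreover have "\<forall>m\<in>{1..j}. path_height (\<lambda>k. p (j - Suc k)) m = path_height p j - path_height p (j - m)"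
    by (simp add: path_height_reversed)
  ultimately show ?thesis unfolding stays_pos_def by auto
qed

lemma stays_nonpos_shifted_iff:
  assumes "j \<le> n"
  shows "stays_nonpos (n - j) (\<lambda>k. p (j + k)) \<longleftrightarrow> (\<forall>i\<in>{j<..n}. path_height p i \<le> path_height p j)"
proof -
  have "(\<forall>m\<in>{1..n - j}. path_height p (j + m) \<le> path_height p j) \<longleftrightarrow> (\<forall>i\<in>{j<..n}. path_height p i \<le> path_height p j)"
  proof safe
    fix i assume "\<forall>m\<in>{1..n - j}. path_height p (j + m) \<le> path_height p j" "i \<in> {j<..n}"
    moreover from \<open>i \<in> {j<..n}\<close> have "i - j \<in> {1..n - j}" "j + (i - j) = i" by auto
    ultimately show "path_height p i \<le> path_height p j" by metis
  next
    fix m assume "\<forall>i\<in>{j<..n}. path_height p i \<le> path_height p j" "m \<in> {1..n - j}"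
    moreover from \<open>m \<in> {1..n - j}\<close> have "j + m \<in> {j<..n}" by auto
    ultimately show "path_height p (j + m) \<le> path_height p j" by blast
  qed
  then show ?thesis unfolding stays_nonpos_def by (simp add: path_height_shifted)
qed

definition restricted_char ::
    "(nat \<Rightarrow> (nat \<Rightarrow> 'v) \<Rightarrow> bool) \<Rightarrow> 'v::real_inner \<Rightarrow> nat \<Rightarrow> (nat \<Rightarrow> 'v) \<Rightarrow> complex" where
  "restricted_char E \<xi> n p = (if E n p then cis (\<xi> \<bullet> (\<Sum>k<n. p k)) else 0)"

lemma norm_restricted_char_le: "norm (restricted_char E \<xi> n p) \<le> 1"
  by (simp add: restricted_char_def)

lemma restricted_char_Suc:
  assumes "E n p \<longleftrightarrow> E (Suc n) p \<or> E' (Suc n) p" "\<not> (E (Suc n) p \<and> E' (Suc n) p)"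
  shows "restricted_char E \<xi> (Suc n) p + restricted_char E' \<xi> (Suc n) p
    = restricted_char E \<xi> n p * cis (\<xi> \<bullet> p n)"
  using assms by (auto simp: restricted_char_def inner_add_right cis_mult)

lemma sum_norm_restricted_char_le:
  assumes "\<And>n m. E n p \<Longrightarrow> E m p \<Longrightarrow> n = m"
  shows "(\<Sum>n<N. norm (restricted_char E \<xi> n p)) \<le> 1"
proof (cases "\<exists>n<N. E n p")
  case True
  then obtain n0 where "n0 < N" "E n0 p" by blast
  with assms have "(\<Sum>n<N. norm (restricted_char E \<xi> n p)) = (\<Sum>n<N. if n = n0 then 1 else 0)"
    by (intro sum.cong) (auto simp: restricted_char_def)
  with \<open>n0 < N\<close> show ?thesis by simp
next
  case False
  then have "(\<Sum>n<N. norm (restricted_char E \<xi> n p)) = 0"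
    by (intro sum.neutral) (auto simp: restricted_char_def)
  then show ?thesis by simp
qed

lemma sum_restricted_char_power_unique:
  assumes "E n0 p" "\<And>n. E n p \<Longrightarrow> n = n0" "n0 < N"
  shows "(\<Sum>n<N. restricted_char E \<xi> n p * s ^ n) = cis (\<xi> \<bullet> (\<Sum>k<n0. p k)) * s ^ n0"
proof -
  have "restricted_char E \<xi> n p * s ^ n = (if n = n0 then cis (\<xi> \<bullet> (\<Sum>k<n0. p k)) * s ^ n0 else 0)" for n
  proof (cases "n = n0")
    case True
    with assms(1) show ?thesis by (simp add: restricted_char_def)
  next
    case False
    with assms(2)[of n] show ?thesis by (auto simp: restricted_char_def)
  qed
  with assms(3) show ?thesis by simp
qed

text \<open>
  Split at the first time j at which the height attains its maximum over {0..n}. Seen from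
  time j, the first j increments read backwards keep the height strictly positive, and the
  remaining increments never make it positive.
\<close>

lemma first_max_decomposition:
  "cis (\<xi> \<bullet> (\<Sum>k<n. p k)) = (\<Sum>j\<le>n.
     restricted_char stays_pos \<xi> j (\<lambda>k. p (j - Suc k)) * restricted_char stays_nonpos \<xi> (n - j) (\<lambda>k. p (j + k)))"
proof -
  define first_max where "first_max j \<longleftrightarrow>
    j \<le> n \<and> (\<forall>i<j. path_height p i < path_height p j) \<and> (\<forall>i\<in>{j<..n}. path_height p i \<le> path_height p j)" for j
  obtain j0 where j0: "first_max j0" and unique: "\<And>j. first_max j \<Longrightarrow> j = j0"
    using first_argmax_ex1[of n "path_height p"] unfolding first_max_def by blast
  have "restricted_char stays_pos \<xi> j (\<lambda>k. p (j - Suc k)) * restricted_char stays_nonpos \<xi> (n - j) (\<lambda>k. p (j + k))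
      = (if j = j0 then cis (\<xi> \<bullet> (\<Sum>k<n. p k)) else 0)" if "j \<le> n" for j
  proof -
    have "(\<Sum>k<j. p (j - Suc k)) + (\<Sum>k<n - j. p (j + k)) = (\<Sum>k<n. p k)"
      using that by (simp add: sum_lessThan_reverse sum_lessThan_shift)
    then have "cis (\<xi> \<bullet> (\<Sum>k<j. p (j - Suc k))) * cis (\<xi> \<bullet> (\<Sum>k<n - j. p (j + k)))
        = cis (\<xi> \<bullet> (\<Sum>k<n. p k))"
      by (metis cis_mult inner_add_right)
    moreover have "stays_pos j (\<lambda>k. p (j - Suc k)) \<and> stays_nonpos (n - j) (\<lambda>k. p (j + k)) \<longleftrightarrow> j = j0"
      using that j0 unique unfolding stays_pos_reversed_iff stays_nonpos_shifted_iff[OF that] first_max_def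
      by blast
    ultimately show ?thesis by (auto simp: restricted_char_def)
  qed
  then have "(\<Sum>j\<le>n. restricted_char stays_pos \<xi> j (\<lambda>k. p (j - Suc k))
      * restricted_char stays_nonpos \<xi> (n - j) (\<lambda>k. p (j + k)))
    = (\<Sum>j\<le>n. if j = j0 then cis (\<xi> \<bullet> (\<Sum>k<n. p k)) else 0)"
    by (intro sum.cong) auto
  also have "\<dots> = cis (\<xi> \<bullet> (\<Sum>k<n. p k))"
    using j0 by (simp add: first_max_def)
  finally show ?thesis ..
qed

section \<open>Wiener--Hopf factorisation of power series\<close>

lemma summable_norm_bounded_coeffs:
  fixes f :: "nat \<Rightarrow> 'a::real_normed_field"
  assumes "norm s < 1" "\<And>n. norm (f n) \<le> 1"
  shows "summable (\<lambda>n. norm (f n * s ^ n))"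
proof (rule summable_comparison_test[OF _ summable_geometric])
  show "\<exists>N. \<forall>n\<ge>N. norm (norm (f n * s ^ n)) \<le> norm s ^ n"
    using assms(2) by (auto simp: norm_mult norm_power intro!: mult_left_le_one_le)
qed (use assms(1) in simp)

lemma power_series_recurrence:
  fixes a c :: "nat \<Rightarrow> complex" and \<phi> s :: complex
  assumes "summable (\<lambda>n. norm (a n * s ^ n))" "summable (\<lambda>n. norm (c n * s ^ n))"
    and "a 0 = 1" "c 0 = 0" and rec: "\<And>n. a (Suc n) + c (Suc n) = \<phi> * a n"
  shows "1 - (\<Sum>n. c n * s ^ n) = (1 - s * \<phi>) * (\<Sum>n. a n * s ^ n)"
proof -
  define A C where "A = (\<Sum>n. a n * s ^ n)" and "C = (\<Sum>n. c n * s ^ n)"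
  have A: "(\<lambda>n. a n * s ^ n) sums A" and C: "(\<lambda>n. c n * s ^ n) sums C"
    unfolding A_def C_def using assms(1,2) by (simp_all add: summable_sums summable_norm_cancel)
  let ?f = "\<lambda>n. a n * s ^ n + c n * s ^ n"
  have "?f (Suc n) = s * \<phi> * (a n * s ^ n)" for n
    by (simp add: rec flip: distrib_right)
  moreover have "(\<lambda>n. s * \<phi> * (a n * s ^ n)) sums (s * \<phi> * A)"
    by (rule sums_mult[OF A])
  ultimately have "(\<lambda>n. ?f (Suc n)) sums (s * \<phi> * A)" by simp
  then have "?f sums (s * \<phi> * A + 1)"
    using sums_Suc_iff[of ?f] \<open>a 0 = 1\<close> \<open>c 0 = 0\<close> by simp
  moreover have "?f sums (A + C)" by (rule sums_add[OF A C])
  ultimately have "s * \<phi> * A + 1 = A + C" by (rule sums_unique2)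
  then show ?thesis unfolding A_def C_def by (simp add: algebra_simps)
qed

text \<open>
  For the random walk, a n and b n are the transforms E[e^(i \<xi>\<cdot>S_n)] restricted to paths
  whose heights stay \<open>\<le> 0\<close>, resp. \<open>> 0\<close>, up to time n, while c n and d n are restricted to the
  first strict ascending, resp. weak descending, ladder epoch being n.
\<close>

locale wiener_hopf_system =
  fixes \<phi> :: complex and a b c d :: "nat \<Rightarrow> complex"
  assumes norm_phi: "norm \<phi> \<le> 1"
    and norm_a: "norm (a n) \<le> 1" and norm_b: "norm (b n) \<le> 1"
    and sum_norm_c: "(\<Sum>n<N. norm (c n)) \<le> 1" and sum_norm_d: "(\<Sum>n<N. norm (d n)) \<le> 1"
    and a_0: "a 0 = 1" and b_0: "b 0 = 1" and c_0: "c 0 = 0" and d_0: "d 0 = 0"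
    and a_Suc: "a (Suc n) + c (Suc n) = \<phi> * a n"
    and b_Suc: "b (Suc n) + d (Suc n) = \<phi> * b n"
    and convolution: "(\<Sum>j\<le>n. b j * a (n - j)) = \<phi> ^ n"
begin

lemma norm_c: "norm (c n) \<le> 1" and norm_d: "norm (d n) \<le> 1"
  using member_le_sum[of n "{..<Suc n}" "\<lambda>n. norm (c n)"] sum_norm_c[of "Suc n"]
    member_le_sum[of n "{..<Suc n}" "\<lambda>n. norm (d n)"] sum_norm_d[of "Suc n"]
  by auto

lemma factorization:
  assumes s: "norm s < 1"
  shows "(1 - (\<Sum>n. c n * s ^ n)) * (1 - (\<Sum>n. d n * s ^ n)) = 1 - s * \<phi>"
proof -
  have sa: "summable (\<lambda>n. norm (a n * s ^ n))" and sb: "summable (\<lambda>n. norm (b n * s ^ n))"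
    and sc: "summable (\<lambda>n. norm (c n * s ^ n))" and sd: "summable (\<lambda>n. norm (d n * s ^ n))"
    using s by (simp_all add: summable_norm_bounded_coeffs norm_a norm_b norm_c norm_d)
  define A B where "A = (\<Sum>n. a n * s ^ n)" and "B = (\<Sum>n. b n * s ^ n)"
  have A: "1 - (\<Sum>n. c n * s ^ n) = (1 - s * \<phi>) * A"
    unfolding A_def using sa sc a_0 c_0 a_Suc by (rule power_series_recurrence)
  have B: "1 - (\<Sum>n. d n * s ^ n) = (1 - s * \<phi>) * B"
    unfolding B_def using sb sd b_0 d_0 b_Suc by (rule power_series_recurrence)
  have "norm (s * \<phi>) \<le> norm s"
    using norm_phi by (simp add: norm_mult mult_left_le)
  with s have s_phi: "norm (s * \<phi>) < 1" by simp
  then have ne: "1 - s * \<phi> \<noteq> 0" by auto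
  have "B * A = (\<Sum>k. \<Sum>i\<le>k. (b i * s ^ i) * (a (k - i) * s ^ (k - i)))"
    unfolding A_def B_def by (rule Cauchy_product[OF sb sa])
  also have "\<dots> = (\<Sum>k. (s * \<phi>) ^ k)"
  proof (rule suminf_cong)
    fix k
    have "(b i * s ^ i) * (a (k - i) * s ^ (k - i)) = (s ^ i * s ^ (k - i)) * (b i * a (k - i))" for i
      by (simp only: mult_ac)
    then have "(\<Sum>i\<le>k. (b i * s ^ i) * (a (k - i) * s ^ (k - i))) = s ^ k * (\<Sum>i\<le>k. b i * a (k - i))"
      unfolding sum_distrib_left by (intro sum.cong) (simp_all flip: power_add)
    then show "(\<Sum>i\<le>k. (b i * s ^ i) * (a (k - i) * s ^ (k - i))) = (s * \<phi>) ^ k"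
      by (simp add: convolution power_mult_distrib)
  qed
  also have "\<dots> = 1 / (1 - s * \<phi>)"
    using geometric_sums[OF s_phi] by (simp add: sums_iff)
  finally have "B * A * (1 - s * \<phi>) = 1"
    using ne by simp
  moreover have "(1 - s * \<phi>) * A * ((1 - s * \<phi>) * B) = B * A * (1 - s * \<phi>) * (1 - s * \<phi>)"
    by (simp only: mult_ac)
  ultimately show ?thesis unfolding A B by simp
qed

lemma bound_inside_disc:
  assumes s: "norm s < 1"
  shows "norm (1 - s * \<phi>) \<le> 2 * norm (1 - (\<Sum>n. c n * s ^ n))"
proof -
  have sd: "summable (\<lambda>n. norm (d n * s ^ n))"
    using s by (intro summable_norm_bounded_coeffs norm_d)
  have sum_d: "summable (\<lambda>n. norm (d n))"
    by (rule summableI_nonneg_bounded[OF _ sum_norm_d]) simp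
  have "(\<Sum>n. norm (d n)) \<le> 1"
    by (rule suminf_le_const[OF sum_d sum_norm_d])
  have "norm (\<Sum>n. d n * s ^ n) \<le> (\<Sum>n. norm (d n * s ^ n))"
    by (rule summable_norm[OF sd])
  also have "\<dots> \<le> (\<Sum>n. norm (d n))"
    using s sd sum_d
    by (intro suminf_le) (auto simp: norm_mult norm_power intro!: mult_left_le power_le_one)
  finally have "norm (1 - (\<Sum>n. d n * s ^ n)) \<le> 2"
    using \<open>(\<Sum>n. norm (d n)) \<le> 1\<close> norm_triangle_ineq4[of 1 "\<Sum>n. d n * s ^ n"] by simp
  then show ?thesis
    unfolding factorization[OF s, symmetric] norm_mult
    by (metis mult.commute mult_left_mono norm_ge_zero)
qed

lemma bound_on_circle:
  assumes u: "norm u = 1"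
  shows "1 - norm \<phi> \<le> 2 * norm (1 - (\<Sum>n. c n * u ^ n))"
proof -
  define g where "g r = (\<Sum>n. c n * (of_real r * u) ^ n)" for r :: real
  have summable_c: "summable (\<lambda>n. norm (c n))"
    by (rule summableI_nonneg_bounded[OF _ sum_norm_c]) simp
  have "uniform_limit {0..1} (\<lambda>N r. \<Sum>n<N. c n * (of_real r * u) ^ n) g sequentially"
    unfolding g_def
    by (rule Weierstrass_m_test[OF _ summable_c])
       (use u in \<open>auto simp: norm_mult norm_power intro!: mult_right_le_one_le power_le_one\<close>)
  then have "continuous_on {0..1} g"
    by (rule uniform_limit_theorem[rotated]) (simp, intro always_eventually allI continuous_intros)
  moreover have "(\<lambda>k. real k / real (Suc k)) \<longlonglongrightarrow> 1"
    by (rule LIMSEQ_n_over_Suc_n)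
  ultimately have "(\<lambda>k. g (real k / real (Suc k))) \<longlonglongrightarrow> g 1"
    by (rule continuous_on_tendsto_compose) (auto intro!: always_eventually)
  then have lim: "(\<lambda>k. 2 * norm (1 - g (real k / real (Suc k)))) \<longlonglongrightarrow> 2 * norm (1 - g 1)"
    by (intro tendsto_intros)
  have "1 - norm \<phi> \<le> 2 * norm (1 - g r)" if r: "0 \<le> r" "r < 1" for r
  proof -
    have "1 - norm \<phi> \<le> 1 - r * norm \<phi>"
      using r norm_phi by (simp add: mult_left_le_one_le)
    also have "\<dots> \<le> norm (1 - (of_real r * u) * \<phi>)"
      using norm_triangle_ineq2[of 1 "(of_real r * u) * \<phi>"] r u by (simp add: norm_mult)
    also have "\<dots> \<le> 2 * norm (1 - g r)"
      unfolding g_def using r u by (intro bound_inside_disc) (simp add: norm_mult)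
    finally show ?thesis .
  qed
  then have "1 - norm \<phi> \<le> 2 * norm (1 - g 1)"
    by (intro LIMSEQ_le_const[OF lim]) auto
  then show ?thesis by (simp add: g_def)
qed

end

section \<open>Functionals of i.i.d. increments\<close>

lemma measurable_component_PiM:
  "(\<lambda>x. x k) \<in> borel_measurable (PiM I (\<lambda>_. (borel :: 'b::topological_space measure)))"
proof (cases "k \<in> I")
  case True
  then show ?thesis by (rule measurable_component_singleton)
next
  case False
  have "(\<lambda>x. undefined) \<in> borel_measurable (PiM I (\<lambda>_. (borel :: 'b measure)))"
    by simp
  then show ?thesis
    by (rule measurable_cong[THEN iffD1, rotated])
       (use False in \<open>auto simp: space_PiM PiE_def extensional_def\<close>)
qed

lemma measurable_PiM_UNIV_imp_PiM:
  assumes "F \<in> PiM UNIV (\<lambda>_. borel) \<rightarrow>\<^sub>M N"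
  shows "F \<in> PiM I (\<lambda>_. (borel :: 'b::topological_space measure)) \<rightarrow>\<^sub>M N"
proof -
  have "(\<lambda>x. \<lambda>k\<in>UNIV. x k) \<in> PiM I (\<lambda>_. (borel :: 'b measure)) \<rightarrow>\<^sub>M PiM UNIV (\<lambda>_. borel)"
    by (intro measurable_restrict measurable_component_PiM)
  from measurable_comp[OF this assms] show ?thesis by (simp add: comp_def restrict_UNIV)
qed

lemma measurable_reindex_PiM:
  "(\<lambda>x. \<lambda>k. x (\<sigma> k)) \<in> PiM UNIV (\<lambda>_. borel) \<rightarrow>\<^sub>M PiM UNIV (\<lambda>_. (borel :: 'b::topological_space measure))"
  by (rule measurable_restrict[of UNIV, unfolded restrict_UNIV]) (rule measurable_component_PiM)

definition adapted :: "(nat \<Rightarrow> (nat \<Rightarrow> 'v::topological_space) \<Rightarrow> bool) \<Rightarrow> bool" where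
  "adapted E \<longleftrightarrow> (\<forall>n. Measurable.pred (PiM UNIV (\<lambda>_. borel)) (E n)) \<and> (\<forall>n p. E n (restrict p {..<n}) = E n p)"

lemma measurable_path_height [measurable]:
  "(\<lambda>p. path_height p i) \<in> borel_measurable (PiM UNIV (\<lambda>_. (borel :: (real \<times> 'u::topological_space) measure)))"
proof -
  have "(\<lambda>p :: nat \<Rightarrow> real \<times> 'u. fst (p k)) \<in> borel_measurable (PiM UNIV (\<lambda>_. (borel :: (real \<times> 'u) measure)))" for k
    by (rule measurable_compose[OF measurable_component_PiM])
       (intro borel_measurable_continuous_onI continuous_intros)
  then show ?thesis unfolding path_height_def by (rule borel_measurable_sum)
qed

lemma path_height_restrict: "i \<le> n \<Longrightarrow> path_height (restrict p {..<n}) i = path_height p i"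
  unfolding path_height_def by (intro sum.cong) auto

lemma adapted_ladder_events:
  "adapted (stays_nonpos :: _ \<Rightarrow> (nat \<Rightarrow> real \<times> 'u::topological_space) \<Rightarrow> bool)"
  "adapted (stays_pos :: _ \<Rightarrow> (nat \<Rightarrow> real \<times> 'u) \<Rightarrow> bool)"
  "adapted (ascending_ladder_epoch :: _ \<Rightarrow> (nat \<Rightarrow> real \<times> 'u) \<Rightarrow> bool)"
  "adapted (weak_descending_ladder_epoch :: _ \<Rightarrow> (nat \<Rightarrow> real \<times> 'u) \<Rightarrow> bool)"
  unfolding adapted_def stays_nonpos_def stays_pos_def ascending_ladder_epoch_def
    weak_descending_ladder_epoch_def
  by (auto simp: path_height_restrict)

lemma restricted_char_restrict:
  assumes "adapted E"
  shows "restricted_char E \<xi> n (restrict p {..<n}) = restricted_char E \<xi> n p"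
proof -
  have "(\<Sum>k<n. restrict p {..<n} k) = (\<Sum>k<n. p k)" by (rule sum.cong) auto
  with assms show ?thesis unfolding adapted_def restricted_char_def by simp
qed

lemma restricted_char_cong:
  assumes "adapted E" "\<And>k. k < n \<Longrightarrow> p k = q k"
  shows "restricted_char E \<xi> n p = restricted_char E \<xi> n q"
proof -
  have "restrict p {..<n} = restrict q {..<n}" using assms(2) by (auto simp: restrict_def)
  then show ?thesis by (metis restricted_char_restrict[OF assms(1)])
qed

lemma measurable_cis_inner [measurable]:
  "(\<lambda>z. cis (\<xi> \<bullet> z)) \<in> borel_measurable (borel :: 'v::real_inner measure)"
  by (intro borel_measurable_continuous_onI continuous_intros)

lemma measurable_restricted_char:
  assumes "adapted E"
  shows "restricted_char E \<xi> n \<in> borel_measurable (PiM UNIV (\<lambda>_. (borel :: 'v::euclidean_space measure)))"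
proof -
  have "(\<lambda>p. \<Sum>k<n. p k) \<in> borel_measurable (PiM UNIV (\<lambda>_. (borel :: 'v measure)))"
    by (intro borel_measurable_sum measurable_component_PiM)
  moreover have "Measurable.pred (PiM UNIV (\<lambda>_. borel)) (E n)"
    using assms by (simp add: adapted_def)
  ultimately show ?thesis
    unfolding restricted_char_def by (intro measurable_If measurable_compose[OF _ measurable_cis_inner]) auto
qed

locale iid_sequence = prob_space M for M :: "'a measure" +
  fixes X :: "nat \<Rightarrow> 'a \<Rightarrow> 'b::topological_space"
  assumes indep: "indep_vars (\<lambda>_. borel) X UNIV"
    and ident_distr: "distr M borel (X n) = distr M borel (X 0)"
begin

lemma measurable_X [measurable]: "X n \<in> borel_measurable M"
  using indep unfolding indep_vars_def by auto

lemma distr_compose_ident: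
  assumes "h \<in> borel \<rightarrow>\<^sub>M N"
  shows "distr M N (\<lambda>\<omega>. h (X n \<omega>)) = distr M N (\<lambda>\<omega>. h (X 0 \<omega>))"
  using distr_distr[OF assms measurable_X, of n] distr_distr[OF assms measurable_X, of 0]
  by (simp add: comp_def ident_distr[of n])

lemma iid_sequence_compose:
  assumes "h \<in> borel \<rightarrow>\<^sub>M (borel :: 'c::topological_space measure)"
  shows "iid_sequence M (\<lambda>n \<omega>. h (X n \<omega>))"
proof
  show "indep_vars (\<lambda>_. borel) (\<lambda>n \<omega>. h (X n \<omega>)) UNIV"
    by (rule indep_vars_compose2[OF indep]) (use assms in simp)
  show "distr M borel (\<lambda>\<omega>. h (X n \<omega>)) = distr M borel (\<lambda>\<omega>. h (X 0 \<omega>))" for n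
    by (rule distr_compose_ident[OF assms])
qed

lemma integral_ident:
  fixes h :: "'b \<Rightarrow> 'c::{banach, second_countable_topology}"
  assumes "h \<in> borel_measurable borel"
  shows "(\<integral>\<omega>. h (X n \<omega>) \<partial>M) = (\<integral>\<omega>. h (X 0 \<omega>) \<partial>M)"
  using integral_distr[OF measurable_X assms, of n] integral_distr[OF measurable_X assms, of 0]
  by (simp add: ident_distr[of n])

lemma integrable_ident:
  fixes h :: "'b \<Rightarrow> 'c::{banach, second_countable_topology}"
  assumes "h \<in> borel_measurable borel"
  shows "integrable M (\<lambda>\<omega>. h (X n \<omega>)) \<longleftrightarrow> integrable M (\<lambda>\<omega>. h (X 0 \<omega>))"
  using integrable_distr_eq[OF measurable_X assms, of n] integrable_distr_eq[OF measurable_X assms, of 0]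
  by (simp add: ident_distr[of n])

end

locale iid_increments = iid_sequence M Z
  for M :: "'a measure" and Z :: "nat \<Rightarrow> 'a \<Rightarrow> real \<times> 'u::euclidean_space"
begin

lemma measurable_path: "(\<lambda>\<omega> k. Z k \<omega>) \<in> M \<rightarrow>\<^sub>M PiM UNIV (\<lambda>_. borel)"
  by (rule measurable_restrict[of UNIV, unfolded restrict_UNIV]) (rule measurable_X)

lemma measurable_path_functional:
  "F \<in> PiM UNIV (\<lambda>_. borel) \<rightarrow>\<^sub>M N \<Longrightarrow> (\<lambda>\<omega>. F (\<lambda>k. Z k \<omega>)) \<in> M \<rightarrow>\<^sub>M N"
  using measurable_comp[OF measurable_path] by (simp add: comp_def)

lemma integrable_unit_bounded:
  fixes f :: "'a \<Rightarrow> complex"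
  assumes "f \<in> borel_measurable M" "\<And>\<omega>. norm (f \<omega>) \<le> 1"
  shows "integrable M f"
  using assms by (intro integrable_const_bound[where B=1] AE_I2) auto

lemma norm_integral_unit_bounded:
  fixes f :: "'a \<Rightarrow> complex"
  assumes "f \<in> borel_measurable M" "\<And>\<omega>. norm (f \<omega>) \<le> 1"
  shows "norm (LINT \<omega>|M. f \<omega>) \<le> 1"
proof -
  have "norm (LINT \<omega>|M. f \<omega>) \<le> (LINT \<omega>|M. norm (f \<omega>))"
    by (rule integral_norm_bound)
  also have "\<dots> \<le> (LINT \<omega>|M. 1)"
    using assms by (intro integral_mono integrable_norm integrable_unit_bounded) auto
  finally show ?thesis by (simp add: prob_space)
qed

lemma distr_reindexed_path:
  assumes "inj_on \<sigma> I"
  shows "distr M (PiM I (\<lambda>_. borel)) (\<lambda>\<omega>. \<lambda>k\<in>I. Z (\<sigma> k) \<omega>) = PiM I (\<lambda>_. distr M borel (Z 0))"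
proof -
  let ?\<mu> = "distr M borel (Z 0)"
  have "distr M (PiM UNIV (\<lambda>_. borel)) (\<lambda>\<omega>. \<lambda>k\<in>UNIV. Z k \<omega>) = PiM UNIV (\<lambda>k. distr M borel (Z k))"
    using indep by (subst (asm) indep_vars_iff_distr_eq_PiM) simp_all
  also have "\<dots> = PiM UNIV (\<lambda>_. ?\<mu>)"
    by (intro PiM_cong refl ident_distr)
  finally have full: "distr M (PiM UNIV (\<lambda>_. borel)) (\<lambda>\<omega> k. Z k \<omega>) = PiM UNIV (\<lambda>_. ?\<mu>)"
    by (simp add: restrict_UNIV)
  have reindex: "(\<lambda>x. \<lambda>k\<in>I. x (\<sigma> k)) \<in> PiM UNIV (\<lambda>_. borel) \<rightarrow>\<^sub>M PiM I (\<lambda>_. borel)"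
    by (intro measurable_restrict measurable_component_PiM)
  have "distr M (PiM I (\<lambda>_. borel)) (\<lambda>\<omega>. \<lambda>k\<in>I. Z (\<sigma> k) \<omega>)
      = distr (distr M (PiM UNIV (\<lambda>_. borel)) (\<lambda>\<omega> k. Z k \<omega>)) (PiM I (\<lambda>_. borel)) (\<lambda>x. \<lambda>k\<in>I. x (\<sigma> k))"
    by (subst distr_distr[OF reindex measurable_path]) (simp add: comp_def)
  also have "\<dots> = distr (PiM UNIV (\<lambda>_. ?\<mu>)) (PiM I (\<lambda>_. ?\<mu>)) (\<lambda>x. \<lambda>k\<in>I. x (\<sigma> k))"
    unfolding full by (intro distr_cong refl sets_PiM_cong) auto
  also have "\<dots> = PiM I (\<lambda>_. ?\<mu>)"
    using distr_PiM_reindex[of UNIV "\<lambda>_. ?\<mu>" \<sigma> I] assms by (simp add: prob_space_distr)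
  finally show ?thesis .
qed

lemma integral_reindexed_path:
  fixes F :: "(nat \<Rightarrow> real \<times> 'u) \<Rightarrow> complex"
  assumes "inj_on \<sigma> I" and F: "F \<in> borel_measurable (PiM UNIV (\<lambda>_. borel))"
    and local: "\<And>p. F (restrict p I) = F p"
  shows "(LINT \<omega>|M. F (\<lambda>k. Z (\<sigma> k) \<omega>)) = (LINT \<omega>|M. F (\<lambda>k. Z k \<omega>))"
proof -
  have F_I: "F \<in> borel_measurable (PiM I (\<lambda>_. borel))"
    by (rule measurable_PiM_UNIV_imp_PiM[OF F])
  have "(LINT \<omega>|M. F (\<lambda>k. Z (\<tau> k) \<omega>)) = integral\<^sup>L (PiM I (\<lambda>_. distr M borel (Z 0))) F"
    if "inj_on \<tau> I" for \<tau>
  proof -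
    have "(LINT \<omega>|M. F (\<lambda>k. Z (\<tau> k) \<omega>)) = (LINT \<omega>|M. F (\<lambda>k\<in>I. Z (\<tau> k) \<omega>))"
      by (simp add: local[of "\<lambda>k. Z (\<tau> k) _", symmetric])
    also have "\<dots> = integral\<^sup>L (distr M (PiM I (\<lambda>_. borel)) (\<lambda>\<omega>. \<lambda>k\<in>I. Z (\<tau> k) \<omega>)) F"
      by (rule integral_distr[symmetric, OF _ F_I]) (intro measurable_restrict measurable_X)
    finally show ?thesis by (simp add: distr_reindexed_path[OF that])
  qed
  from this[OF assms(1)] this[of id] show ?thesis by simp
qed

lemma integral_mult_indep_blocks:
  fixes f g :: "(nat \<Rightarrow> real \<times> 'u) \<Rightarrow> complex"
  assumes "A \<inter> B = {}"
    and f: "f \<in> borel_measurable (PiM UNIV (\<lambda>_. borel))" and g: "g \<in> borel_measurable (PiM UNIV (\<lambda>_. borel))"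
    and local: "\<And>p. f (restrict p A) = f p" "\<And>p. g (restrict p B) = g p"
    and bounded: "\<And>p. norm (f p) \<le> 1" "\<And>p. norm (g p) \<le> 1"
  shows "(LINT \<omega>|M. f (\<lambda>k. Z k \<omega>) * g (\<lambda>k. Z k \<omega>))
    = (LINT \<omega>|M. f (\<lambda>k. Z k \<omega>)) * (LINT \<omega>|M. g (\<lambda>k. Z k \<omega>))"
proof -
  have "indep_var (PiM A (\<lambda>_. borel)) (\<lambda>\<omega>. \<lambda>k\<in>A. Z k \<omega>) (PiM B (\<lambda>_. borel)) (\<lambda>\<omega>. \<lambda>k\<in>B. Z k \<omega>)"
    using indep_var_restrict[OF indep assms(1)] by simp
  from indep_var_compose[OF this measurable_PiM_UNIV_imp_PiM[OF f] measurable_PiM_UNIV_imp_PiM[OF g]]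
  have "indep_var borel (\<lambda>\<omega>. f (\<lambda>k. Z k \<omega>)) borel (\<lambda>\<omega>. g (\<lambda>k. Z k \<omega>))"
    by (simp add: comp_def local)
  moreover have "integrable M (\<lambda>\<omega>. f (\<lambda>k. Z k \<omega>))" "integrable M (\<lambda>\<omega>. g (\<lambda>k. Z k \<omega>))"
    using f g bounded by (auto intro!: integrable_unit_bounded measurable_path_functional)
  ultimately show ?thesis by (rule indep_var_lebesgue_integral)
qed

definition char_fun :: "real \<times> 'u \<Rightarrow> complex" where
  "char_fun \<xi> = (LINT \<omega>|M. cis (\<xi> \<bullet> Z 0 \<omega>))"

definition ladder_coeff :: "(nat \<Rightarrow> (nat \<Rightarrow> real \<times> 'u) \<Rightarrow> bool) \<Rightarrow> real \<times> 'u \<Rightarrow> nat \<Rightarrow> complex" where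
  "ladder_coeff E \<xi> n = (LINT \<omega>|M. restricted_char E \<xi> n (\<lambda>k. Z k \<omega>))"

lemma measurable_cis_Z: "(\<lambda>\<omega>. cis (\<xi> \<bullet> Z k \<omega>)) \<in> borel_measurable M"
  by (rule measurable_compose[OF measurable_X measurable_cis_inner])

lemma integral_cis_Z: "(LINT \<omega>|M. cis (\<xi> \<bullet> Z n \<omega>)) = char_fun \<xi>"
  unfolding char_fun_def by (rule integral_ident[OF measurable_cis_inner])

lemma norm_char_fun_le: "norm (char_fun \<xi>) \<le> 1"
  unfolding char_fun_def by (rule norm_integral_unit_bounded[OF measurable_cis_Z]) simp

lemma measurable_restricted_char_path [measurable]:
  "adapted E \<Longrightarrow> (\<lambda>\<omega>. restricted_char E \<xi> n (\<lambda>k. Z k \<omega>)) \<in> borel_measurable M"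
  by (rule measurable_path_functional[OF measurable_restricted_char])

lemma norm_ladder_coeff_le: "adapted E \<Longrightarrow> norm (ladder_coeff E \<xi> n) \<le> 1"
  unfolding ladder_coeff_def
  by (rule norm_integral_unit_bounded[OF measurable_restricted_char_path norm_restricted_char_le])

lemma sum_norm_ladder_coeff_le:
  assumes "adapted E" and unique: "\<And>n m p. E n p \<Longrightarrow> E m p \<Longrightarrow> n = m"
  shows "(\<Sum>n<N. norm (ladder_coeff E \<xi> n)) \<le> 1"
proof -
  have int: "integrable M (\<lambda>\<omega>. restricted_char E \<xi> n (\<lambda>k. Z k \<omega>))" for n
    by (rule integrable_unit_bounded[OF measurable_restricted_char_path[OF assms(1)] norm_restricted_char_le])
  have "(\<Sum>n<N. norm (ladder_coeff E \<xi> n)) \<le> (\<Sum>n<N. LINT \<omega>|M. norm (restricted_char E \<xi> n (\<lambda>k. Z k \<omega>)))"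
    unfolding ladder_coeff_def by (intro sum_mono integral_norm_bound)
  also have "\<dots> = (LINT \<omega>|M. (\<Sum>n<N. norm (restricted_char E \<xi> n (\<lambda>k. Z k \<omega>))))"
    by (rule Bochner_Integration.integral_sum[symmetric]) (intro integrable_norm int)
  also have "\<dots> \<le> (LINT \<omega>|M. 1)"
  proof (rule integral_mono)
    show "integrable M (\<lambda>\<omega>. \<Sum>n<N. norm (restricted_char E \<xi> n (\<lambda>k. Z k \<omega>)))"
      by (intro Bochner_Integration.integrable_sum integrable_norm int)
    show "(\<Sum>n<N. norm (restricted_char E \<xi> n (\<lambda>k. Z k \<omega>))) \<le> 1" for \<omega>
      by (rule sum_norm_restricted_char_le) (rule unique)
  qed simp
  finally show ?thesis by (simp add: prob_space)
qed

lemma ladder_coeff_Suc: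
  assumes "adapted E" "adapted E'"
    and "\<And>p. E n p \<longleftrightarrow> E (Suc n) p \<or> E' (Suc n) p" "\<And>p. \<not> (E (Suc n) p \<and> E' (Suc n) p)"
  shows "ladder_coeff E \<xi> (Suc n) + ladder_coeff E' \<xi> (Suc n) = char_fun \<xi> * ladder_coeff E \<xi> n"
proof -
  let ?step = "\<lambda>p :: nat \<Rightarrow> real \<times> 'u. cis (\<xi> \<bullet> p n)"
  have step: "?step \<in> borel_measurable (PiM UNIV (\<lambda>_. borel))"
    by (intro measurable_compose[OF measurable_component_PiM measurable_cis_inner])
  have "ladder_coeff E \<xi> (Suc n) + ladder_coeff E' \<xi> (Suc n)
      = (LINT \<omega>|M. restricted_char E \<xi> (Suc n) (\<lambda>k. Z k \<omega>) + restricted_char E' \<xi> (Suc n) (\<lambda>k. Z k \<omega>))"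
    unfolding ladder_coeff_def using assms(1,2)
    by (intro Bochner_Integration.integral_add[symmetric] integrable_unit_bounded[OF
          measurable_restricted_char_path norm_restricted_char_le])
  also have "\<dots> = (LINT \<omega>|M. restricted_char E \<xi> n (\<lambda>k. Z k \<omega>) * ?step (\<lambda>k. Z k \<omega>))"
    using restricted_char_Suc[of E n _ E', OF assms(3,4)] by simp
  also have "\<dots> = ladder_coeff E \<xi> n * (LINT \<omega>|M. ?step (\<lambda>k. Z k \<omega>))"
    unfolding ladder_coeff_def
    by (rule integral_mult_indep_blocks[of "{..<n}" "{n}" "restricted_char E \<xi> n" ?step,
          OF _ measurable_restricted_char[OF assms(1)] step restricted_char_restrict[OF assms(1)] _
          norm_restricted_char_le]) simp_all
  finally show ?thesis by (simp add: integral_cis_Z mult.commute)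
qed

lemma integral_cis_sum: "(LINT \<omega>|M. cis (\<xi> \<bullet> (\<Sum>k<n. Z k \<omega>))) = char_fun \<xi> ^ n"
proof -
  have "indep_vars (\<lambda>_. borel) (\<lambda>k \<omega>. cis (\<xi> \<bullet> Z k \<omega>)) {..<n}"
    by (rule indep_vars_compose2[OF indep_vars_subset[OF indep]]) auto
  then have "(LINT \<omega>|M. (\<Prod>k<n. cis (\<xi> \<bullet> Z k \<omega>))) = (\<Prod>k<n. LINT \<omega>|M. cis (\<xi> \<bullet> Z k \<omega>))"
    by (rule indep_vars_lebesgue_integral[rotated]) (simp_all add: integrable_unit_bounded[OF measurable_cis_Z])
  moreover have "cis (\<xi> \<bullet> (\<Sum>k<n. Z k \<omega>)) = (\<Prod>k<n. cis (\<xi> \<bullet> Z k \<omega>))" for \<omega>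
    by (induction n) (simp_all add: inner_add_right flip: cis_mult)
  ultimately have "(LINT \<omega>|M. cis (\<xi> \<bullet> (\<Sum>k<n. Z k \<omega>))) = (\<Prod>k<n. LINT \<omega>|M. cis (\<xi> \<bullet> Z k \<omega>))"
    by simp
  then show ?thesis by (simp add: integral_cis_Z)
qed

lemma ladder_coeff_reversed:
  assumes "adapted E"
  shows "(LINT \<omega>|M. restricted_char E \<xi> j (\<lambda>k. Z (j - Suc k) \<omega>)) = ladder_coeff E \<xi> j"
  unfolding ladder_coeff_def
  by (rule integral_reindexed_path[of "\<lambda>k. j - Suc k" "{..<j}" "restricted_char E \<xi> j",
        OF _ measurable_restricted_char[OF assms] restricted_char_restrict[OF assms]])
     (auto simp: inj_on_def)

lemma ladder_coeff_shifted:
  assumes "adapted E"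
  shows "(LINT \<omega>|M. restricted_char E \<xi> m (\<lambda>k. Z (j + k) \<omega>)) = ladder_coeff E \<xi> m"
  unfolding ladder_coeff_def
  by (rule integral_reindexed_path[of "\<lambda>k. j + k" "{..<m}" "restricted_char E \<xi> m",
        OF _ measurable_restricted_char[OF assms] restricted_char_restrict[OF assms]])
     simp

lemma ladder_coeff_convolution:
  "(\<Sum>j\<le>n. ladder_coeff stays_pos \<xi> j * ladder_coeff stays_nonpos \<xi> (n - j)) = char_fun \<xi> ^ n"
proof -
  define f where "f j p = restricted_char stays_pos \<xi> j (\<lambda>k. p (j - Suc k))"
    for j and p :: "nat \<Rightarrow> real \<times> 'u"
  define g where "g j p = restricted_char stays_nonpos \<xi> (n - j) (\<lambda>k. p (j + k))"
    for j and p :: "nat \<Rightarrow> real \<times> 'u"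
  have meas: "f j \<in> borel_measurable (PiM UNIV (\<lambda>_. borel))" "g j \<in> borel_measurable (PiM UNIV (\<lambda>_. borel))" for j
    unfolding f_def g_def using adapted_ladder_events(1,2)
    by (auto intro!: measurable_compose[OF measurable_reindex_PiM measurable_restricted_char])
  have bounded: "norm (f j p) \<le> 1" "norm (g j p) \<le> 1" for j p
    unfolding f_def g_def by (simp_all add: norm_restricted_char_le)
  have "char_fun \<xi> ^ n = (LINT \<omega>|M. cis (\<xi> \<bullet> (\<Sum>k<n. Z k \<omega>)))"
    by (rule integral_cis_sum[symmetric])
  also have "\<dots> = (LINT \<omega>|M. (\<Sum>j\<le>n. f j (\<lambda>k. Z k \<omega>) * g j (\<lambda>k. Z k \<omega>)))"
    unfolding f_def g_def by (subst first_max_decomposition) (rule refl)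
  also have "\<dots> = (\<Sum>j\<le>n. LINT \<omega>|M. f j (\<lambda>k. Z k \<omega>) * g j (\<lambda>k. Z k \<omega>))"
    using meas bounded
    by (intro Bochner_Integration.integral_sum integrable_unit_bounded[OF
          borel_measurable_times[OF measurable_path_functional measurable_path_functional]])
       (simp_all add: norm_mult mult_le_one)
  also have "\<dots> = (\<Sum>j\<le>n. ladder_coeff stays_pos \<xi> j * ladder_coeff stays_nonpos \<xi> (n - j))"
  proof (intro sum.cong refl)
    fix j assume "j \<in> {..n}"
    have local: "f j (restrict p {..<j}) = f j p" "g j (restrict p {j..<n}) = g j p" for p
      unfolding f_def g_def using \<open>j \<in> {..n}\<close>
      by (auto intro!: restricted_char_cong adapted_ladder_events)
    have "(LINT \<omega>|M. f j (\<lambda>k. Z k \<omega>) * g j (\<lambda>k. Z k \<omega>))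
        = (LINT \<omega>|M. f j (\<lambda>k. Z k \<omega>)) * (LINT \<omega>|M. g j (\<lambda>k. Z k \<omega>))"
      by (rule integral_mult_indep_blocks[of "{..<j}" "{j..<n}" "f j" "g j", OF _ meas local bounded]) auto
    then show "(LINT \<omega>|M. f j (\<lambda>k. Z k \<omega>) * g j (\<lambda>k. Z k \<omega>))
        = ladder_coeff stays_pos \<xi> j * ladder_coeff stays_nonpos \<xi> (n - j)"
      unfolding f_def g_def by (simp add: ladder_coeff_reversed ladder_coeff_shifted adapted_ladder_events)
  qed
  finally show ?thesis ..
qed

lemma wiener_hopf_system_ladder_coeffs:
  "wiener_hopf_system (char_fun \<xi>) (ladder_coeff stays_nonpos \<xi>) (ladder_coeff stays_pos \<xi>)
     (ladder_coeff ascending_ladder_epoch \<xi>) (ladder_coeff weak_descending_ladder_epoch \<xi>)"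
proof
  show "norm (char_fun \<xi>) \<le> 1" by (rule norm_char_fun_le)
  show "norm (ladder_coeff stays_nonpos \<xi> n) \<le> 1" "norm (ladder_coeff stays_pos \<xi> n) \<le> 1" for n
    by (simp_all add: norm_ladder_coeff_le adapted_ladder_events)
  show "(\<Sum>n<N. norm (ladder_coeff ascending_ladder_epoch \<xi> n)) \<le> 1" for N
    by (rule sum_norm_ladder_coeff_le[OF adapted_ladder_events(3) ascending_ladder_epoch_unique])
  show "(\<Sum>n<N. norm (ladder_coeff weak_descending_ladder_epoch \<xi> n)) \<le> 1" for N
    by (rule sum_norm_ladder_coeff_le[OF adapted_ladder_events(4) weak_descending_ladder_epoch_unique])
  show "ladder_coeff stays_nonpos \<xi> 0 = 1" "ladder_coeff stays_pos \<xi> 0 = 1"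
    "ladder_coeff ascending_ladder_epoch \<xi> 0 = 0" "ladder_coeff weak_descending_ladder_epoch \<xi> 0 = 0"
    by (simp_all add: ladder_coeff_def restricted_char_def stays_nonpos_def stays_pos_def
        ascending_ladder_epoch_def weak_descending_ladder_epoch_def prob_space)
  show "ladder_coeff stays_nonpos \<xi> (Suc n) + ladder_coeff ascending_ladder_epoch \<xi> (Suc n)
      = char_fun \<xi> * ladder_coeff stays_nonpos \<xi> n" for n
    by (rule ladder_coeff_Suc[of stays_nonpos ascending_ladder_epoch n,
          OF adapted_ladder_events(1,3) stays_nonpos_Suc_cases])
  show "ladder_coeff stays_pos \<xi> (Suc n) + ladder_coeff weak_descending_ladder_epoch \<xi> (Suc n)
      = char_fun \<xi> * ladder_coeff stays_pos \<xi> n" for n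
    by (rule ladder_coeff_Suc[of stays_pos weak_descending_ladder_epoch n,
          OF adapted_ladder_events(2,4) stays_pos_Suc_cases])
  show "(\<Sum>j\<le>n. ladder_coeff stays_pos \<xi> j * ladder_coeff stays_nonpos \<xi> (n - j)) = char_fun \<xi> ^ n" for n
    by (rule ladder_coeff_convolution)
qed

lemma one_minus_norm_char_fun_le_ladder_series:
  "1 - norm (char_fun \<xi>) \<le> 2 * norm (1 - (\<Sum>n. ladder_coeff ascending_ladder_epoch \<xi> n * cis t ^ n))"
  by (rule wiener_hopf_system.bound_on_circle[OF wiener_hopf_system_ladder_coeffs]) simp

end

section \<open>A weak law of large numbers\<close>

lemma (in prob_space) integrable_neg_part:
  fixes X :: "'a \<Rightarrow> real"
  assumes [measurable]: "X \<in> borel_measurable M"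
    and "(\<integral>\<^sup>+\<omega>. ennreal (max 0 (- X \<omega>)) \<partial>M) < (\<integral>\<^sup>+\<omega>. ennreal (max 0 (X \<omega>)) \<partial>M)"
  shows "integrable M (\<lambda>\<omega>. max 0 (- X \<omega>))"
proof (rule integrableI_nonneg)
  show "(\<integral>\<^sup>+\<omega>. ennreal (max 0 (- X \<omega>)) \<partial>M) < \<infinity>"
    using assms(2) top.not_eq_extremum by fastforce
qed simp_all

lemma (in prob_space) exists_truncation_pos_integral:
  fixes X :: "'a \<Rightarrow> real"
  assumes [measurable]: "X \<in> borel_measurable M"
    and mean: "(\<integral>\<^sup>+\<omega>. ennreal (max 0 (- X \<omega>)) \<partial>M) < (\<integral>\<^sup>+\<omega>. ennreal (max 0 (X \<omega>)) \<partial>M)"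
  obtains K :: real where "0 < K" "integrable M (\<lambda>\<omega>. min (X \<omega>) K)" "0 < (\<integral>\<omega>. min (X \<omega>) K \<partial>M)"
proof -
  define trunc where "trunc K \<omega> = min (max 0 (X \<omega>)) (real K)" for K :: nat and \<omega>
  have neg: "integrable M (\<lambda>\<omega>. max 0 (- X \<omega>))"
    using integrable_neg_part[OF assms] .
  have trunc_int: "integrable M (trunc K)" for K
    unfolding trunc_def by (rule integrable_const_bound[where B="real K"]) auto
  have "(\<integral>\<^sup>+\<omega>. ennreal (max 0 (X \<omega>)) \<partial>M) = (\<integral>\<^sup>+\<omega>. (SUP K. ennreal (trunc K \<omega>)) \<partial>M)"
  proof (intro nn_integral_cong antisym)
    fix \<omega>
    obtain K :: nat where "max 0 (X \<omega>) \<le> real K" using real_arch_simple by blast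
    then show "ennreal (max 0 (X \<omega>)) \<le> (SUP K. ennreal (trunc K \<omega>))"
      unfolding trunc_def by (intro SUP_upper2[of K]) auto
    show "(SUP K. ennreal (trunc K \<omega>)) \<le> ennreal (max 0 (X \<omega>))"
      unfolding trunc_def by (intro SUP_least ennreal_leI) simp
  qed
  also have "\<dots> = (SUP K. \<integral>\<^sup>+\<omega>. ennreal (trunc K \<omega>) \<partial>M)"
    by (rule nn_integral_monotone_convergence_SUP)
       (auto simp: trunc_def incseq_def le_fun_def intro!: ennreal_leI)
  finally obtain K where K: "(\<integral>\<^sup>+\<omega>. ennreal (max 0 (- X \<omega>)) \<partial>M) < (\<integral>\<^sup>+\<omega>. ennreal (trunc K \<omega>) \<partial>M)"
    using mean by (auto simp: less_SUP_iff)
  moreover have "(\<integral>\<^sup>+\<omega>. ennreal (max 0 (- X \<omega>)) \<partial>M) = ennreal (\<integral>\<omega>. max 0 (- X \<omega>) \<partial>M)"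
    by (rule nn_integral_eq_integral[OF neg]) simp
  moreover have "(\<integral>\<^sup>+\<omega>. ennreal (trunc K \<omega>) \<partial>M) = ennreal (\<integral>\<omega>. trunc K \<omega> \<partial>M)"
    by (rule nn_integral_eq_integral[OF trunc_int]) (simp add: trunc_def)
  ultimately have "(\<integral>\<omega>. max 0 (- X \<omega>) \<partial>M) < (\<integral>\<omega>. trunc K \<omega> \<partial>M)"
    by (simp add: ennreal_less_iff integral_nonneg_AE)
  also have "\<dots> - (\<integral>\<omega>. max 0 (- X \<omega>) \<partial>M) = (\<integral>\<omega>. min (X \<omega>) (real K) \<partial>M)"
    by (subst Bochner_Integration.integral_diff[OF trunc_int neg, symmetric])
       (auto simp: trunc_def intro!: Bochner_Integration.integral_cong)
  finally have pos: "0 < (\<integral>\<omega>. min (X \<omega>) (real K) \<partial>M)" by simp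
  have "integrable M (\<lambda>\<omega>. trunc K \<omega> - max 0 (- X \<omega>))"
    using trunc_int neg by simp
  moreover have "(\<lambda>\<omega>. trunc K \<omega> - max 0 (- X \<omega>)) = (\<lambda>\<omega>. min (X \<omega>) (real K))"
    by (auto simp: trunc_def)
  ultimately have int: "integrable M (\<lambda>\<omega>. min (X \<omega>) (real K))" by simp
  have "(\<integral>\<omega>. min (X \<omega>) (real K) \<partial>M) \<le> (\<integral>\<omega>. real K \<partial>M)"
    by (rule integral_mono[OF int]) auto
  with pos have "0 < real K" by (simp add: prob_space)
  from this int pos show thesis by (rule that)
qed

lemma (in prob_space) lower_tail_integral_tendsto_0:
  fixes X :: "'a \<Rightarrow> real"
  assumes [measurable]: "X \<in> borel_measurable M" and "integrable M (\<lambda>\<omega>. max 0 (- X \<omega>))"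
  shows "(\<lambda>L::nat. \<integral>\<omega>. max 0 (- real L - X \<omega>) \<partial>M) \<longlonglongrightarrow> 0"
proof -
  have "(\<lambda>L::nat. \<integral>\<omega>. max 0 (- real L - X \<omega>) \<partial>M) \<longlonglongrightarrow> (\<integral>\<omega>. 0 \<partial>M)"
  proof (rule integral_dominated_convergence[where w="\<lambda>\<omega>. max 0 (- X \<omega>)"])
    show "AE \<omega> in M. (\<lambda>L. max 0 (- real L - X \<omega>)) \<longlonglongrightarrow> 0"
    proof (rule AE_I2)
      fix \<omega>
      obtain L0 :: nat where "- X \<omega> \<le> real L0" using real_arch_simple by blast
      then have "\<forall>\<^sub>F L in sequentially. max 0 (- real L - X \<omega>) = 0"
        by (auto simp: eventually_sequentially intro!: exI[of _ L0])
      then show "(\<lambda>L. max 0 (- real L - X \<omega>)) \<longlonglongrightarrow> 0"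
        by (rule tendsto_eventually)
    qed
  qed (use assms(2) in auto)
  then show ?thesis by simp
qed

lemma hoeffding_lower_tail_tendsto_0:
  fixes Y :: "nat \<Rightarrow> 'a \<Rightarrow> real"
  assumes "iid_sequence M Y" and bounds: "AE \<omega> in M. Y 0 \<omega> \<in> {a..b}" "a < b" and "0 < \<delta>"
  shows "(\<lambda>n. measure M {\<omega>\<in>space M. (\<Sum>k<n. Y k \<omega>) \<le> real n * ((\<integral>\<omega>. Y 0 \<omega> \<partial>M) - \<delta>)}) \<longlonglongrightarrow> 0"
proof -
  interpret iid_sequence M Y by fact
  define \<mu> where "\<mu> = (\<integral>\<omega>. Y 0 \<omega> \<partial>M)"
  define q where "q = exp (- 2 * \<delta>\<^sup>2 / (b - a)\<^sup>2)"
  have "measure M {\<omega>\<in>space M. (\<Sum>k<n. Y k \<omega>) \<le> real n * (\<mu> - \<delta>)} \<le> q ^ n" if "0 < n" for n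
  proof -
    interpret Hoeffding_ineq_iid M "{..<n}" Y "Y 0" a b \<mu>
    proof unfold_locales
      show "indep_vars (\<lambda>_. borel) Y {..<n}" by (rule indep_vars_subset[OF indep]) simp
      show "distr M borel (Y i) = distr M borel (Y 0)" for i by (rule ident_distr)
      show "AE \<omega> in M. Y 0 \<omega> \<in> {a..b}" by (rule bounds(1))
      show "\<mu> \<equiv> expectation (Y 0)" unfolding \<mu>_def by (rule reflexive)
    qed simp_all
    have "{\<omega>\<in>space M. (\<Sum>k<n. Y k \<omega>) \<le> real n * (\<mu> - \<delta>)}
        = {\<omega>\<in>space M. (\<Sum>k<n. Y k \<omega>) / real n \<le> \<mu> - \<delta>}"
      using that by (auto simp: divide_le_eq mult.commute)
    then have "measure M {\<omega>\<in>space M. (\<Sum>k<n. Y k \<omega>) \<le> real n * (\<mu> - \<delta>)}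
        \<le> exp (- 2 * real n * \<delta>\<^sup>2 / (b - a)\<^sup>2)"
      using Hoeffding_ineq_le'[of \<delta>] \<open>0 < \<delta>\<close> \<open>a < b\<close> that by (simp add: lessThan_empty_iff)
    also have "\<dots> = q ^ n"
      unfolding q_def by (simp flip: exp_of_nat_mult)
    finally show ?thesis .
  qed
  then have bound: "\<forall>\<^sub>F n in sequentially. measure M {\<omega>\<in>space M. (\<Sum>k<n. Y k \<omega>) \<le> real n * (\<mu> - \<delta>)} \<le> q ^ n"
    by (intro eventually_sequentiallyI[of 1]) simp
  moreover have geometric: "(\<lambda>n. q ^ n) \<longlonglongrightarrow> 0"
    unfolding q_def using \<open>a < b\<close> \<open>0 < \<delta>\<close> by (intro LIMSEQ_power_zero) simp
  show ?thesis
    unfolding \<mu>_def[symmetric] by (rule tendsto_sandwich[OF _ bound tendsto_const geometric]) simp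
qed

lemma markov_sum_iid:
  fixes R :: "nat \<Rightarrow> 'a \<Rightarrow> real"
  assumes "iid_sequence M R" "integrable M (R 0)" "\<And>k \<omega>. 0 \<le> R k \<omega>" "0 < n" "0 < c"
  shows "measure M {\<omega>\<in>space M. real n * c \<le> (\<Sum>k<n. R k \<omega>)} \<le> (\<integral>\<omega>. R 0 \<omega> \<partial>M) / c"
proof -
  interpret iid_sequence M R by fact
  have int: "integrable M (R k)" for k
    using integrable_ident[of "\<lambda>x. x" k] assms(2) by simp
  have "measure M {\<omega>\<in>space M. real n * c \<le> (\<Sum>k<n. R k \<omega>)} \<le> (\<integral>\<omega>. (\<Sum>k<n. R k \<omega>) \<partial>M) / (real n * c)"
  proof (rule integral_Markov_inequality_measure[where A="space M"])
    show "integrable M (\<lambda>\<omega>. \<Sum>k<n. R k \<omega>)" by (rule Bochner_Integration.integrable_sum) (rule int)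
    show "AE \<omega> in M. 0 \<le> (\<Sum>k<n. R k \<omega>)" by (rule AE_I2) (simp add: assms(3) sum_nonneg)
  qed (use assms(4,5) in simp_all)
  also have "(\<integral>\<omega>. (\<Sum>k<n. R k \<omega>) \<partial>M) = (\<Sum>k<n. \<integral>\<omega>. R 0 \<omega> \<partial>M)"
    unfolding Bochner_Integration.integral_sum[OF int] by (intro sum.cong refl integral_ident) simp
  finally show ?thesis using assms(4) by simp
qed

lemma (in prob_space) prob_sum_nonpos_le_tails:
  fixes X Y R :: "nat \<Rightarrow> 'a \<Rightarrow> real"
  assumes [measurable]: "\<And>k. X k \<in> borel_measurable M" "\<And>k. Y k \<in> borel_measurable M"
      "\<And>k. R k \<in> borel_measurable M"
    and "\<And>k \<omega>. Y k \<omega> - R k \<omega> \<le> X k \<omega>" "2 * c \<le> \<mu>"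
  shows "measure M {\<omega>\<in>space M. (\<Sum>k<n. X k \<omega>) \<le> 0}
    \<le> measure M {\<omega>\<in>space M. (\<Sum>k<n. Y k \<omega>) \<le> real n * (\<mu> - c)}
      + measure M {\<omega>\<in>space M. real n * c \<le> (\<Sum>k<n. R k \<omega>)}"
proof -
  have "(\<Sum>k<n. Y k \<omega>) \<le> (\<Sum>k<n. X k \<omega>) + (\<Sum>k<n. R k \<omega>)" for \<omega>
    unfolding sum.distrib[symmetric] by (intro sum_mono) (use assms(4) in \<open>auto simp: algebra_simps\<close>)
  moreover have "real n * c \<le> real n * (\<mu> - c)"
    using assms(5) by (intro mult_left_mono) auto
  ultimately have "{\<omega>\<in>space M. (\<Sum>k<n. X k \<omega>) \<le> 0}
      \<subseteq> {\<omega>\<in>space M. (\<Sum>k<n. Y k \<omega>) \<le> real n * (\<mu> - c)} \<union> {\<omega>\<in>space M. real n * c \<le> (\<Sum>k<n. R k \<omega>)}"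
    by (smt (verit) Collect_mono_iff Un_iff mem_Collect_eq subsetI)
  then have "measure M {\<omega>\<in>space M. (\<Sum>k<n. X k \<omega>) \<le> 0}
      \<le> measure M ({\<omega>\<in>space M. (\<Sum>k<n. Y k \<omega>) \<le> real n * (\<mu> - c)}
        \<union> {\<omega>\<in>space M. real n * c \<le> (\<Sum>k<n. R k \<omega>)})"
    by (rule finite_measure_mono) measurable
  also have "\<dots> \<le> measure M {\<omega>\<in>space M. (\<Sum>k<n. Y k \<omega>) \<le> real n * (\<mu> - c)}
      + measure M {\<omega>\<in>space M. real n * c \<le> (\<Sum>k<n. R k \<omega>)}"
    by (rule measure_Un_le) measurable
  finally show ?thesis .
qed

lemma prob_sum_nonpos_tendsto_0:
  fixes X :: "nat \<Rightarrow> 'a \<Rightarrow> real"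
  assumes iid: "iid_sequence M X"
    and mean: "(\<integral>\<^sup>+\<omega>. ennreal (max 0 (- X 0 \<omega>)) \<partial>M) < (\<integral>\<^sup>+\<omega>. ennreal (max 0 (X 0 \<omega>)) \<partial>M)"
  shows "(\<lambda>n. measure M {\<omega>\<in>space M. (\<Sum>k<n. X k \<omega>) \<le> 0}) \<longlonglongrightarrow> 0"
proof -
  interpret iid_sequence M X by (rule iid)
  obtain K where "0 < K" and int_min: "integrable M (\<lambda>\<omega>. min (X 0 \<omega>) K)"
    and m_pos: "0 < (\<integral>\<omega>. min (X 0 \<omega>) K \<partial>M)"
    by (rule exists_truncation_pos_integral[OF measurable_X mean])
  define m where "m = (\<integral>\<omega>. min (X 0 \<omega>) K \<partial>M)"
  have neg: "integrable M (\<lambda>\<omega>. max 0 (- X 0 \<omega>))"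
    by (rule integrable_neg_part[OF measurable_X mean])
  have "\<forall>\<^sub>F n in sequentially. measure M {\<omega>\<in>space M. (\<Sum>k<n. X k \<omega>) \<le> 0} < \<epsilon>" if "0 < \<epsilon>" for \<epsilon>
  proof -
    have "0 < m * \<epsilon> / 4" using m_pos that by (simp add: m_def)
    from order_tendstoD(2)[OF lower_tail_integral_tendsto_0[OF measurable_X neg] this]
    obtain L :: nat where L: "(\<integral>\<omega>. max 0 (- real L - X 0 \<omega>) \<partial>M) < m * \<epsilon> / 4"
      by (auto simp: eventually_sequentially)
    define Y where "Y k \<omega> = max (- real L) (min (X k \<omega>) K)" for k \<omega>
    define R where "R k \<omega> = max 0 (- real L - X k \<omega>)" for k \<omega>
    have Y_iid: "iid_sequence M Y"
      unfolding Y_def by (rule iid_sequence_compose) measurable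
    have R_iid: "iid_sequence M R"
      unfolding R_def by (rule iid_sequence_compose) measurable
    have [measurable]: "Y k \<in> borel_measurable M" "R k \<in> borel_measurable M" for k
      using iid_sequence.measurable_X[OF Y_iid] iid_sequence.measurable_X[OF R_iid] by auto
    have R_int: "integrable M (R 0)"
      by (rule Bochner_Integration.integrable_bound[OF neg]) (auto simp: R_def)
    have "m \<le> (\<integral>\<omega>. Y 0 \<omega> \<partial>M)"
      unfolding m_def
      by (rule integral_mono[OF int_min integrable_const_bound[where B="real L + K"]])
         (use \<open>0 < K\<close> in \<open>auto simp: Y_def\<close>)
    have tails: "measure M {\<omega>\<in>space M. (\<Sum>k<n. X k \<omega>) \<le> 0}
        \<le> measure M {\<omega>\<in>space M. (\<Sum>k<n. Y k \<omega>) \<le> real n * ((\<integral>\<omega>. Y 0 \<omega> \<partial>M) - m / 2)}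
          + measure M {\<omega>\<in>space M. real n * (m / 2) \<le> (\<Sum>k<n. R k \<omega>)}" for n
      by (rule prob_sum_nonpos_le_tails) (use \<open>m \<le> _\<close> in \<open>auto simp: Y_def R_def\<close>)
    have hoeffding: "\<forall>\<^sub>F n in sequentially.
        measure M {\<omega>\<in>space M. (\<Sum>k<n. Y k \<omega>) \<le> real n * ((\<integral>\<omega>. Y 0 \<omega> \<partial>M) - m / 2)} < \<epsilon> / 2"
    proof (rule order_tendstoD(2)[OF hoeffding_lower_tail_tendsto_0[OF Y_iid]])
      show "AE \<omega> in M. Y 0 \<omega> \<in> {- real L..K}" using \<open>0 < K\<close> by (auto simp: Y_def)
    qed (use \<open>0 < K\<close> m_pos that in \<open>simp_all add: m_def\<close>)
    have markov: "measure M {\<omega>\<in>space M. real n * (m / 2) \<le> (\<Sum>k<n. R k \<omega>)} < \<epsilon> / 2" if "0 < n" for n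
    proof -
      have "measure M {\<omega>\<in>space M. real n * (m / 2) \<le> (\<Sum>k<n. R k \<omega>)} \<le> (\<integral>\<omega>. R 0 \<omega> \<partial>M) / (m / 2)"
        by (rule markov_sum_iid[OF R_iid R_int _ that]) (use m_pos in \<open>auto simp: R_def m_def\<close>)
      also have "\<dots> < \<epsilon> / 2"
        using L m_pos by (simp add: R_def m_def field_simps)
      finally show ?thesis .
    qed
    from hoeffding eventually_gt_at_top[of 0] show ?thesis
    proof eventually_elim
      case (elim n)
      with tails[of n] markov[of n] show ?case by simp
    qed
  qed
  moreover have "\<forall>\<^sub>F n in sequentially. a < measure M {\<omega>\<in>space M. (\<Sum>k<n. X k \<omega>) \<le> 0}" if "a < 0" for a
    using that measure_nonneg[of M] by (intro always_eventually allI) (meson less_le_trans)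
  ultimately show ?thesis by (intro order_tendstoI)
qed

section \<open>Ladder variables of the random walk\<close>

lemma inner_real_prod: "\<xi> \<bullet> z = fst \<xi> * fst z + snd \<xi> \<bullet> snd z"
  for \<xi> z :: "real \<times> 'u::real_inner"
  by (simp add: inner_prod_def)

lemma (in prob_space) prob_pos_if_mean_pos:
  fixes X :: "'a \<Rightarrow> real"
  assumes [measurable]: "X \<in> borel_measurable M"
    and mean: "(\<integral>\<^sup>+\<omega>. ennreal (max 0 (- X \<omega>)) \<partial>M) < (\<integral>\<^sup>+\<omega>. ennreal (max 0 (X \<omega>)) \<partial>M)"
  shows "0 < prob {\<omega>\<in>space M. 0 < X \<omega>}"
proof (rule ccontr)
  assume "\<not> ?thesis"
  then have "prob {\<omega>\<in>space M. 0 < X \<omega>} = 0"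
    using measure_nonneg[of M] by (meson antisym not_less)
  then have "AE \<omega> in M. X \<omega> \<le> 0"
    by (subst AE_iff_measurable[OF _ refl]) (auto simp: emeasure_eq_measure not_le)
  then have "(\<integral>\<^sup>+\<omega>. ennreal (max 0 (X \<omega>)) \<partial>M) = (\<integral>\<^sup>+\<omega>. 0 \<partial>M)"
    by (intro nn_integral_cong_AE) (auto elim!: eventually_mono simp: ennreal_neg)
  with mean show False by simp
qed

lemma int_subgroup_one_eq_UNIV:
  assumes "int_subgroup B" "1 \<in> B"
  shows "B = UNIV"
proof -
  have nat: "int n \<in> B" for n
    by (induction n) (use assms in \<open>auto simp: int_subgroup_def\<close>)
  have "z \<in> B" for z
  proof (cases "0 \<le> z")
    case True
    then show ?thesis using nat[of "nat z"] by simp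
  next
    case False
    then have "- z \<in> B" using nat[of "nat (- z)"] by simp
    with assms(1) show ?thesis unfolding int_subgroup_def by force
  qed
  then show ?thesis by blast
qed

lemma Limsup_less_imp_eventually_less:
  fixes f :: "'a \<Rightarrow> real"
  assumes "Limsup F (\<lambda>x. ereal (f x)) < ereal c"
  obtains \<kappa> where "\<kappa> < c" "\<forall>\<^sub>F x in F. f x < \<kappa>"
proof -
  obtain y where y: "Limsup F (\<lambda>x. ereal (f x)) < y" "y < ereal c"
    using dense[OF assms] by blast
  have ev: "\<forall>\<^sub>F x in F. ereal (f x) < y" by (rule Limsup_lessD[OF y(1)])
  show thesis
  proof (cases y)
    case (real r)
    with ev y(2) show ?thesis by (intro that[of r]) (auto elim: eventually_mono)
  next
    case MInf
    with ev have "\<forall>\<^sub>F x in F. False" by simp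
    then show ?thesis by (intro that[of "c - 1"]) (auto elim: eventually_mono)
  qed (use y(2) in simp)
qed

locale iid_walk = iid_increments M Z
  for M :: "'a measure" and Z :: "nat \<Rightarrow> 'a \<Rightarrow> real \<times> (real ^ 'm)"
begin

lemma fst_walk: "fst (walk Z n \<omega>) = path_height (\<lambda>k. Z k \<omega>) n"
  by (simp add: walk_def path_height_def fst_sum)

lemma measurable_fst_walk [measurable]: "(\<lambda>\<omega>. fst (walk Z n \<omega>)) \<in> borel_measurable M"
proof -
  have "(\<lambda>\<omega>. fst (Z k \<omega>)) \<in> borel_measurable M" for k
    by (rule measurable_compose[OF measurable_X]) (intro borel_measurable_continuous_onI continuous_intros)
  then show ?thesis unfolding fst_walk path_height_def by (rule borel_measurable_sum)
qed

lemma measurable_walk [measurable]: "walk Z n \<in> borel_measurable M"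
  unfolding walk_def by measurable

lemma pred_ladder_finite [measurable]: "Measurable.pred M (ladder_finite Z)"
  unfolding ladder_finite_def by measurable

lemma measurable_ladder_time [measurable]: "ladder_time Z \<in> M \<rightarrow>\<^sub>M count_space UNIV"
  unfolding ladder_time_def by measurable

lemma measurable_ladder_char:
  "(\<lambda>\<omega>. cis (\<xi> \<bullet> ladder_height Z \<omega> + t * real (ladder_time Z \<omega>))) \<in> borel_measurable M"
proof -
  have "(\<lambda>\<omega>. cis (\<xi> \<bullet> walk Z n \<omega> + t * real n)) \<in> borel_measurable M" for n
    by (rule measurable_compose[OF measurable_walk]) (intro borel_measurable_continuous_onI continuous_intros)
  then show ?thesis
    unfolding ladder_height_def by (rule measurable_compose_countable[OF _ measurable_ladder_time])
qed

lemma ladder_time_epoch: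
  assumes "ladder_finite Z \<omega>"
  shows "ascending_ladder_epoch (ladder_time Z \<omega>) (\<lambda>k. Z k \<omega>)"
proof -
  let ?h = "path_height (\<lambda>k. Z k \<omega>)"
  have "\<exists>n. 0 < ?h n" using assms by (simp add: ladder_finite_def fst_walk)
  moreover have "ladder_time Z \<omega> = (LEAST n. 0 < ?h n)"
    using assms by (simp add: ladder_time_def fst_walk)
  ultimately show ?thesis
    unfolding ascending_ladder_epoch_def using LeastI_ex not_less_Least by (metis atLeastLessThan_iff not_less)
qed

lemma ladder_time_eq_1:
  assumes "0 < fst (Z 0 \<omega>)"
  shows "ladder_finite Z \<omega>" "ladder_time Z \<omega> = 1"
proof -
  have "0 < fst (walk Z 1 \<omega>)" using assms by (simp add: walk_def)
  then show fin: "ladder_finite Z \<omega>" by (auto simp: ladder_finite_def)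
  have "ascending_ladder_epoch 1 (\<lambda>k. Z k \<omega>)"
    using assms by (simp add: ascending_ladder_epoch_def path_height_def)
  then show "ladder_time Z \<omega> = 1"
    using ascending_ladder_epoch_unique ladder_time_epoch[OF fin] by blast
qed

lemma AE_ladder_finite:
  assumes mean: "(\<integral>\<^sup>+\<omega>. ennreal (max 0 (- fst (Z 0 \<omega>))) \<partial>M) < (\<integral>\<^sup>+\<omega>. ennreal (max 0 (fst (Z 0 \<omega>))) \<partial>M)"
  shows "AE \<omega> in M. ladder_finite Z \<omega>"
proof -
  have "iid_sequence M (\<lambda>k \<omega>. fst (Z k \<omega>))"
    by (rule iid_sequence_compose) (intro borel_measurable_continuous_onI continuous_intros)
  from prob_sum_nonpos_tendsto_0[OF this mean]
  have lim: "(\<lambda>n. prob {\<omega>\<in>space M. fst (walk Z n \<omega>) \<le> 0}) \<longlonglongrightarrow> 0"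
    by (simp add: walk_def fst_sum)
  have "prob {\<omega>\<in>space M. \<not> ladder_finite Z \<omega>} \<le> prob {\<omega>\<in>space M. fst (walk Z n \<omega>) \<le> 0}" for n
    by (rule finite_measure_mono) (auto simp: ladder_finite_def not_less)
  then have "prob {\<omega>\<in>space M. \<not> ladder_finite Z \<omega>} \<le> 0"
    by (intro LIMSEQ_le_const[OF lim]) auto
  then have "prob {\<omega>\<in>space M. \<not> ladder_finite Z \<omega>} = 0"
    using measure_nonneg[of M] by (meson antisym)
  then show ?thesis
    by (subst AE_iff_measurable[OF _ refl]) (auto simp: emeasure_eq_measure)
qed

lemma ladder_coeff_sums:
  assumes fin: "AE \<omega> in M. ladder_finite Z \<omega>"
  shows "(\<lambda>n. ladder_coeff ascending_ladder_epoch \<xi> n * cis t ^ n)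
    sums (LINT \<omega>|M. cis (\<xi> \<bullet> ladder_height Z \<omega> + t * real (ladder_time Z \<omega>)))"
proof -
  define S where "S N \<omega> = (\<Sum>n<N. restricted_char ascending_ladder_epoch \<xi> n (\<lambda>k. Z k \<omega>) * cis t ^ n)"
    for N \<omega>
  have "(\<lambda>\<omega>. restricted_char ascending_ladder_epoch \<xi> n (\<lambda>k. Z k \<omega>) * cis t ^ n) \<in> borel_measurable M" for n
    by (rule borel_measurable_times[OF measurable_restricted_char_path[OF adapted_ladder_events(3)]]) simp
  then have S_meas: "(\<lambda>\<omega>. S N \<omega>) \<in> borel_measurable M" for N
    unfolding S_def by (rule borel_measurable_sum)
  have S_bound: "norm (S N \<omega>) \<le> 1" for N \<omega>
  proof -
    have "norm (S N \<omega>) \<le> (\<Sum>n<N. norm (restricted_char ascending_ladder_epoch \<xi> n (\<lambda>k. Z k \<omega>)))"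
      unfolding S_def by (rule order_trans[OF norm_sum]) (simp add: norm_mult norm_power)
    also have "\<dots> \<le> 1"
      by (rule sum_norm_restricted_char_le) (rule ascending_ladder_epoch_unique)
    finally show ?thesis .
  qed
  have "integrable M (\<lambda>\<omega>. restricted_char ascending_ladder_epoch \<xi> n (\<lambda>k. Z k \<omega>) * cis t ^ n)" for n
    by (rule integrable_unit_bounded)
       (simp_all add: measurable_restricted_char_path adapted_ladder_events norm_mult norm_power
         norm_restricted_char_le)
  then have S_integral: "(LINT \<omega>|M. S N \<omega>) = (\<Sum>n<N. ladder_coeff ascending_ladder_epoch \<xi> n * cis t ^ n)" for N
    unfolding S_def ladder_coeff_def by (simp add: Bochner_Integration.integral_sum)
  have lim: "AE \<omega> in M. (\<lambda>N. S N \<omega>) \<longlonglongrightarrow> cis (\<xi> \<bullet> ladder_height Z \<omega> + t * real (ladder_time Z \<omega>))"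
    using fin
  proof eventually_elim
    case (elim \<omega>)
    let ?T = "ladder_time Z \<omega>"
    have power: "cis t ^ ?T = cis (t * real ?T)"
      by (simp add: Complex.DeMoivre mult.commute)
    have "S N \<omega> = cis (\<xi> \<bullet> ladder_height Z \<omega> + t * real ?T)" if "?T < N" for N
      unfolding S_def
      using sum_restricted_char_power_unique[where E=ascending_ladder_epoch and p="\<lambda>k. Z k \<omega>",
          OF ladder_time_epoch[OF elim] ascending_ladder_epoch_unique[OF _ ladder_time_epoch[OF elim]] that]
      by (simp add: ladder_height_def walk_def power cis_mult)
    then show ?case
      by (intro tendsto_eventually eventually_sequentiallyI[of "Suc ?T"]) simp
  qed
  have "(\<lambda>N. LINT \<omega>|M. S N \<omega>) \<longlonglongrightarrow> (LINT \<omega>|M. cis (\<xi> \<bullet> ladder_height Z \<omega> + t * real (ladder_time Z \<omega>)))"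
    by (rule integral_dominated_convergence[OF measurable_ladder_char S_meas _ lim, where w="\<lambda>_. 1"])
       (simp_all add: S_bound)
  then show ?thesis unfolding sums_def S_integral .
qed

lemma one_minus_norm_char_fun_le_ladder_transform:
  assumes "AE \<omega> in M. ladder_finite Z \<omega>"
  shows "1 - norm (char_fun \<xi>)
    \<le> 2 * norm (1 - (LINT \<omega>|M. cis (\<xi> \<bullet> ladder_height Z \<omega> + t * real (ladder_time Z \<omega>))))"
  using one_minus_norm_char_fun_le_ladder_series[of \<xi> t] ladder_coeff_sums[OF assms, of \<xi> t] by (simp add: sums_iff)

lemma ladder_time_arithmetic:
  assumes mean: "(\<integral>\<^sup>+\<omega>. ennreal (max 0 (- fst (Z 0 \<omega>))) \<partial>M) < (\<integral>\<^sup>+\<omega>. ennreal (max 0 (fst (Z 0 \<omega>))) \<partial>M)"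
  shows "arithmetic_on_Z M (ladder_finite Z) (ladder_time Z)"
  unfolding arithmetic_on_Z_def
proof (intro conjI allI impI)
  show "prob {\<omega>\<in>space M. ladder_finite Z \<omega>} = 1"
    using AE_ladder_finite[OF mean] by (subst prob_Collect_eq_1) simp_all
  have [measurable]: "(\<lambda>\<omega>. fst (Z 0 \<omega>)) \<in> borel_measurable M"
    by (rule measurable_compose[OF measurable_X]) (intro borel_measurable_continuous_onI continuous_intros)
  fix B assume "int_subgroup B \<and> B \<noteq> UNIV"
  then have "1 \<notin> B" using int_subgroup_one_eq_UNIV by blast
  then have "{\<omega>\<in>space M. ladder_finite Z \<omega> \<and> int (ladder_time Z \<omega>) \<in> B}
      \<subseteq> space M - {\<omega>\<in>space M. 0 < fst (Z 0 \<omega>)}"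
    using ladder_time_eq_1 by auto
  then have "prob {\<omega>\<in>space M. ladder_finite Z \<omega> \<and> int (ladder_time Z \<omega>) \<in> B}
      \<le> prob (space M - {\<omega>\<in>space M. 0 < fst (Z 0 \<omega>)})"
    by (rule finite_measure_mono) measurable
  also have "\<dots> = 1 - prob {\<omega>\<in>space M. 0 < fst (Z 0 \<omega>)}"
    by (rule prob_compl) measurable
  also have "\<dots> < 1"
    using prob_pos_if_mean_pos[OF _ mean] by simp
  finally show "prob {\<omega>\<in>space M. ladder_finite Z \<omega> \<and> int (ladder_time Z \<omega>) \<in> B} < 1" .
qed

lemma ladder_strongly_nonlattice:
  assumes cramer: "cramer_condition M (Z 0)" and fin: "AE \<omega> in M. ladder_finite Z \<omega>"
  shows "strongly_nonlattice_with M (ladder_height Z) (ladder_time Z)"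
proof -
  have "Limsup at_infinity (\<lambda>\<xi>. ereal (norm (char_fun \<xi>))) < ereal 1"
    using cramer by (simp add: cramer_condition_def char_fun_def inner_real_prod one_ereal_def)
  then obtain \<kappa> where "\<kappa> < 1" and small: "\<forall>\<^sub>F \<xi> in at_infinity. norm (char_fun \<xi>) < \<kappa>"
    by (rule Limsup_less_imp_eventually_less)
  have "\<forall>\<^sub>F \<xi> in at_infinity. ereal ((1 - \<kappa>) / 2) \<le> (INF t\<in>{-pi<..<pi}.
      ereal (norm (1 - (LINT \<omega>|M. cis (\<xi> \<bullet> ladder_height Z \<omega> + t * real (ladder_time Z \<omega>))))))"
    using small
  proof eventually_elim
    case (elim \<xi>)
    show ?case
    proof (rule INF_greatest)
      fix t
      from one_minus_norm_char_fun_le_ladder_transform[OF fin, of \<xi> t] elim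
      show "ereal ((1 - \<kappa>) / 2) \<le> ereal (norm (1 - (LINT \<omega>|M.
          cis (\<xi> \<bullet> ladder_height Z \<omega> + t * real (ladder_time Z \<omega>)))))"
        by simp
    qed
  qed
  then have "ereal ((1 - \<kappa>) / 2) \<le> Liminf at_infinity (\<lambda>\<xi>. INF t\<in>{-pi<..<pi}.
      ereal (norm (1 - (LINT \<omega>|M. cis (\<xi> \<bullet> ladder_height Z \<omega> + t * real (ladder_time Z \<omega>))))))"
    by (rule Liminf_bounded)
  moreover have "0 < ereal ((1 - \<kappa>) / 2)" using \<open>\<kappa> < 1\<close> by simp
  ultimately have "0 < Liminf at_infinity (\<lambda>\<xi>. INF t\<in>{-pi<..<pi}.
      ereal (norm (1 - (LINT \<omega>|M. cis (\<xi> \<bullet> ladder_height Z \<omega> + t * real (ladder_time Z \<omega>))))))"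
    by (simp only: less_le_trans)
  then show ?thesis
    unfolding strongly_nonlattice_with_def by (simp only: inner_real_prod)
qed

end

theorem lemma4p4:
  fixes M :: "'a measure" and Z :: "nat \<Rightarrow> 'a \<Rightarrow> real \<times> (real ^ 'm)"
  assumes "prob_space M"
    and "prob_space.indep_vars M (\<lambda>_. borel) Z UNIV"
    and "\<And>n. distr M borel (Z n) = distr M borel (Z 0)"
    and "(\<integral>\<^sup>+ \<omega>. ennreal (max 0 (- fst (Z 0 \<omega>))) \<partial>M) < (\<integral>\<^sup>+ \<omega>. ennreal (max 0 (fst (Z 0 \<omega>))) \<partial>M)"
    and "cramer_condition M (Z 0)"
  shows "arithmetic_on_Z M (ladder_finite Z) (ladder_time Z)
    \<and> strongly_nonlattice_with M (ladder_height Z) (ladder_time Z)"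
proof -
  interpret prob_space M by (rule assms(1))
  interpret iid_walk M Z by unfold_locales (use assms(2,3) in auto)
  have "AE \<omega> in M. ladder_finite Z \<omega>"
    using assms(4) by (rule AE_ladder_finite)
  with assms(4,5) show ?thesis
    using ladder_time_arithmetic ladder_strongly_nonlattice by blast
qed

end
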